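(* For $n\ge 0$ let $a(n)$ be the number of compositions of $n$ that avoid each of the three compositions $252$, $343$, $424$ (i.e. $2\,5\,2$, $3\,4\,3$, $4\,2\,4$). Then $$\sum_{n=0}^{\infty} a(n)\,x^n = -\frac{x^{17}+3x^{14}+x^{13}-3x^{11}+x^{10}+x^{6}-x^{5}+x^{4}+x^{2}-2x+1}{x^{18}+3x^{15}+2x^{14}-2x^{13}-2x^{12}+3x^{11}-3x^{10}+x^{8}+x^{7}-x^{6}+2x^{5}-x^{4}-2x^{2}+3x-1}.$$ The first 31 terms $a(0),\dots,a(30)$ are $1, 1, 2, 4, 8, 16, 32, 64, 128, 255, 505, 998, 1971, 3893, 7697, 15223, 30113, 59575, 117861, 233164, 461250, 912423, 1804882, 3570257, 7062369, 13970211, 27634848, 54665348, 108135332, 213906125, 423134791$. Moreover $\lim_{n\to\infty} a(n+1)/a(n) = r$ with $r=1.9781317474\ldots$, and $a(n)\sim c\,r^n$ with $c=0.54805291269\ldots$.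
   Context: A composition of a non-negative integer $n$ is a finite ordered list $a_1 a_2\cdots a_k$ of positive integers with $a_1+\cdots+a_k=n$ (the empty composition is the unique composition of $0$). A composition $a_1\cdots a_k$ includes (contains) the composition $b_1\cdots b_s$ if $k\ge s$ and there exists $i$ with $1\le i\le k-s+1$ such that $b_j\le a_{i+j-1}$ for all $j=1,\dots,s$. It avoids $b_1\cdots b_s$ if it does not include it. The decimal constants are given by their printed initial digits. *)

theory Defs
  imports Complex_Main "HOL-Computational_Algebra.Formal_Power_Series" "HOL-Library.Landau_Symbols"
begin

definition is_composition :: "nat \<Rightarrow> nat list \<Rightarrow> bool" where
  "is_composition n as \<longleftrightarrow> (\<forall>a\<in>set as. 0 < a) \<and> sum_list as = n"

definition comp_includes :: "nat list \<Rightarrow> nat list \<Rightarrow> bool" where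
  "comp_includes as bs \<longleftrightarrow> length bs \<le> length as \<and>
     (\<exists>i. i + length bs \<le> length as \<and> (\<forall>j<length bs. bs ! j \<le> as ! (i + j)))"

definition comp_avoids :: "nat list \<Rightarrow> nat list \<Rightarrow> bool" where
  "comp_avoids as bs \<longleftrightarrow> \<not> comp_includes as bs"

definition a_count :: "nat \<Rightarrow> nat" where
  "a_count n = card {as. is_composition n as \<and> comp_avoids as [2,5,2]
                        \<and> comp_avoids as [3,4,3] \<and> comp_avoids as [4,2,4]}"

definition gf_num :: "real fps" where
  "gf_num = fps_X^17 + 3 * fps_X^14 + fps_X^13 - 3 * fps_X^11 + fps_X^10 + fps_X^6
            - fps_X^5 + fps_X^4 + fps_X^2 - 2 * fps_X + 1"

definition gf_den :: "real fps" where
  "gf_den = fps_X^18 + 3 * fps_X^15 + 2 * fps_X^14 - 2 * fps_X^13 - 2 * fps_X^12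
            + 3 * fps_X^11 - 3 * fps_X^10 + fps_X^8 + fps_X^7 - fps_X^6 + 2 * fps_X^5
            - fps_X^4 - 2 * fps_X^2 + 3 * fps_X - 1"

end

theory Submission
  imports Defs "HOL-Computational_Algebra.Polynomial_FPS"
begin

(* Avoiding 252, 343 and 424 is a condition on consecutive parts: a part z may not follow the
   parts x, y when (x, y, z) dominates one of the three patterns.  This condition sees x only
   through min x 4 and y only through min y 5, so the generating functions of the admissible
   continuations of the 20 resulting states satisfy a finite linear system.  Its solution, with
   one common denominator, is checked polynomially; it is the only one because every term of the
   system raises the order of the series.

   The reflected denominator p is the characteristic polynomial of a recurrence of order 18 for
   a(n).  It has a simple root r close to 1.97813, and the quotient q = p / (x - r) satisfies
   sum_j |q_j| (7/4)^j <= (7/4)^17, which makes every solution of the recurrence of q grow at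
   most like (7/4)^n.  Since a(n) - c r^n solves that recurrence for c = (sum_j q_j a(j)) / p'(r),
   a(n) ~ c r^n.  The numerical facts about p, q and c are certified by interval Horner evaluation
   in fixed-point integer arithmetic. *)

section \<open>Linear recurrences\<close>

definition lin_rec :: "'a::comm_semiring_0 poly \<Rightarrow> (nat \<Rightarrow> 'a) \<Rightarrow> nat \<Rightarrow> 'a" where
  "lin_rec p a n = (\<Sum>j\<le>degree p. coeff p j * a (n + j))"

lemma lin_rec_0 [simp]: "lin_rec 0 a n = 0"
  by (simp add: lin_rec_def)

lemma lin_rec_pCons: "lin_rec (pCons c p) a n = c * a n + lin_rec p a (Suc n)"
proof (cases "p = 0")
  case False
  then show ?thesis
    by (simp add: lin_rec_def sum.atMost_Suc_shift del: sum.atMost_Suc)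
qed (simp add: lin_rec_def)

lemma lin_rec_conv_sum:
  assumes "degree p \<le> N"
  shows "lin_rec p a n = (\<Sum>j\<le>N. coeff p j * a (n + j))"
  unfolding lin_rec_def
  by (rule sum.mono_neutral_left) (use assms in \<open>auto simp: coeff_eq_0\<close>)

lemma lin_rec_geometric: "lin_rec p (\<lambda>m. r ^ m) n = r ^ n * poly p r"
  by (induction p arbitrary: n) (simp_all add: lin_rec_pCons algebra_simps)

lemma lin_rec_diff:
  fixes a b :: "nat \<Rightarrow> 'a::comm_ring"
  shows "lin_rec p (\<lambda>m. a m - k * b m) n = lin_rec p a n - k * lin_rec p b n"
  by (induction p arbitrary: n) (simp_all add: lin_rec_pCons algebra_simps)

lemma lin_rec_shift:
  fixes a :: "nat \<Rightarrow> 'a::comm_ring"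
  shows "lin_rec p a (Suc n) - r * lin_rec p a n = lin_rec p (\<lambda>m. a (Suc m) - r * a m) n"
  by (induction p arbitrary: n) (simp_all add: lin_rec_pCons algebra_simps)

lemma lin_rec_synthetic_div:
  fixes a :: "nat \<Rightarrow> 'a::comm_ring"
  shows "lin_rec p a n = lin_rec (synthetic_div p r) (\<lambda>m. a (Suc m) - r * a m) n + poly p r * a n"
  by (induction p arbitrary: n) (simp_all add: lin_rec_pCons algebra_simps)

lemma poly_shift_pCons_Suc: "poly_shift (Suc n) (pCons c p) = poly_shift n p"
  by (rule poly_eqI) (simp add: coeff_poly_shift)

lemma coeff_synthetic_div_conv_poly_shift:
  "coeff (synthetic_div p c) n = poly (poly_shift (Suc n) p) c"
  by (induction p arbitrary: n) (auto simp: poly_shift_pCons_Suc coeff_pCons split: nat.split)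

lemma poly_synthetic_div_self: "poly (synthetic_div p c) c = poly (pderiv p) c"
  by (induction p) (simp_all add: pderiv_pCons algebra_simps)

lemma lin_rec_synthetic_div_at_0:
  "lin_rec (synthetic_div p r) a 0 = poly (\<Sum>j<degree p. smult (a j) (poly_shift (Suc j) p)) r"
proof (cases "degree p")
  case 0
  then have "synthetic_div p r = 0" by (simp add: synthetic_div_eq_0_iff)
  with 0 show ?thesis by simp
next
  case (Suc d)
  then show ?thesis
    by (simp add: lin_rec_def degree_synthetic_div poly_sum coeff_synthetic_div_conv_poly_shift
        lessThan_Suc_atMost mult.commute)
qed

lemma lin_rec_reflect_poly:
  assumes "fps_of_poly q * A = fps_of_poly p" "degree p < degree q"
  shows "lin_rec (reflect_poly q) (fps_nth A) n = 0"
proof -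
  let ?d = "degree q"
  have "lin_rec (reflect_poly q) (fps_nth A) n = (\<Sum>j\<le>?d. coeff q (?d - j) * fps_nth A (n + j))"
    by (simp add: lin_rec_conv_sum[OF degree_reflect_poly_le] coeff_reflect_poly)
  also have "\<dots> = (\<Sum>i\<le>?d. coeff q i * fps_nth A (n + ?d - i))"
    by (rule sum.reindex_bij_witness[where i = "\<lambda>i. ?d - i" and j = "\<lambda>j. ?d - j"]) auto
  also have "\<dots> = (\<Sum>i = 0..n + ?d. coeff q i * fps_nth A (n + ?d - i))"
    by (rule sum.mono_neutral_left) (auto simp: atLeast0AtMost coeff_eq_0)
  also have "\<dots> = coeff p (n + ?d)"
    using arg_cong[OF assms(1), of "\<lambda>f. fps_nth f (n + ?d)"] by (simp add: fps_mult_nth)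
  also have "\<dots> = 0"
    using assms(2) by (simp add: coeff_eq_0)
  finally show ?thesis .
qed

fun quotient_prefix :: "'a::comm_ring_1 poly \<Rightarrow> 'a poly \<Rightarrow> nat \<Rightarrow> 'a list" where
  "quotient_prefix p q 0 = []"
| "quotient_prefix p q (Suc n) =
     (let as = quotient_prefix p q n in as @ [coeff p n - (\<Sum>j = 1..n. coeff q j * as ! (n - j))])"

lemma quotient_prefix_eq:
  assumes "fps_of_poly q * A = fps_of_poly p" "coeff q 0 = 1"
  shows "quotient_prefix p q n = map (fps_nth A) [0..<n]"
proof (induction n)
  case (Suc n)
  have "coeff p n = (\<Sum>j = 0..n. coeff q j * fps_nth A (n - j))"
    using arg_cong[OF assms(1), of "\<lambda>f. fps_nth f n"] by (simp add: fps_mult_nth)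
  also have "\<dots> = fps_nth A n + (\<Sum>j = 1..n. coeff q j * fps_nth A (n - j))"
    using assms(2) by (simp add: sum.atLeast_Suc_atMost)
  finally have "fps_nth A n = coeff p n - (\<Sum>j = 1..n. coeff q j * map (fps_nth A) [0..<n] ! (n - j))"
    by (simp add: algebra_simps)
  with Suc.IH show ?case by (simp add: Let_def)
qed simp

lemma fps_eq_neg_divide:
  fixes A D N :: "'a::field fps"
  assumes "fps_nth D 0 \<noteq> 0" "D * A = - N"
  shows "A = - (N / D)"
proof -
  have "N / D = - (D * A) * inverse D"
    using assms by (simp add: fps_divide_unit)
  also have "\<dots> = - A * (D * inverse D)"
    by (simp add: algebra_simps)
  also have "\<dots> = - A"
    using assms(1) by (simp add: inverse_mult_eq_1')
  finally show ?thesis by simp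
qed

lemma lin_rec_growth_bound:
  fixes f :: "nat \<Rightarrow> real"
  assumes rec: "\<And>n. lin_rec q f n = 0" and "q \<noteq> 0" "0 < R"
    and bound: "(\<Sum>j<degree q. \<bar>coeff q j\<bar> * R ^ j) \<le> \<bar>lead_coeff q\<bar> * R ^ degree q"
  obtains C where "\<And>n. \<bar>f n\<bar> \<le> C * R ^ n"
proof -
  define m where "m = degree q"
  define C where "C = (\<Sum>j<m. \<bar>f j\<bar> / R ^ j)"
  have "C \<ge> 0"
    unfolding C_def using \<open>0 < R\<close> by (intro sum_nonneg) simp
  have lead: "\<bar>lead_coeff q\<bar> > 0"
    using \<open>q \<noteq> 0\<close> by simp
  have "\<bar>f n\<bar> \<le> C * R ^ n" for n
  proof (induction n rule: less_induct)
    case (less n)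
    show ?case
    proof (cases "n < m")
      case True
      then have "\<bar>f n\<bar> / R ^ n \<le> C"
        unfolding C_def using \<open>0 < R\<close> by (intro member_le_sum) auto
      then show ?thesis
        using \<open>0 < R\<close> by (simp add: divide_le_eq)
    next
      case False
      then obtain k where n: "n = k + m"
        by (metis add.commute le_add_diff_inverse not_less)
      have "lin_rec q f k = (\<Sum>j<m. coeff q j * f (k + j)) + lead_coeff q * f n"
        by (simp add: lin_rec_def m_def n lessThan_Suc_atMost[symmetric] add.commute)
      then have "\<bar>lead_coeff q\<bar> * \<bar>f n\<bar> = \<bar>\<Sum>j<m. coeff q j * f (k + j)\<bar>"
        using rec[of k] by (simp add: abs_mult[symmetric] eq_neg_iff_add_eq_0 add.commute)
      also have "\<dots> \<le> (\<Sum>j<m. \<bar>coeff q j\<bar> * (C * R ^ (k + j)))"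
        using less n by (intro order.trans[OF sum_abs] sum_mono)
          (auto simp: abs_mult intro!: mult_left_mono)
      also have "\<dots> = C * R ^ k * (\<Sum>j<m. \<bar>coeff q j\<bar> * R ^ j)"
        by (simp add: sum_distrib_left power_add algebra_simps)
      also have "\<dots> \<le> C * R ^ k * (\<bar>lead_coeff q\<bar> * R ^ m)"
        using bound \<open>C \<ge> 0\<close> \<open>0 < R\<close> by (intro mult_left_mono) (simp_all add: m_def)
      finally have "\<bar>lead_coeff q\<bar> * \<bar>f n\<bar> \<le> \<bar>lead_coeff q\<bar> * (C * R ^ n)"
        by (simp add: n power_add algebra_simps)
      with lead show ?thesis by simp
    qed
  qed
  with that show ?thesis by blast
qed

lemma lin_rec_dominant_root:
  fixes a :: "nat \<Rightarrow> real" and p :: "real poly" and r :: real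
  defines "q \<equiv> synthetic_div p r"
  assumes rec: "\<And>n. lin_rec p a n = 0" and root: "poly p r = 0" and simple: "poly q r \<noteq> 0"
    and R: "0 < R" "R < r"
    and bound: "(\<Sum>j<degree q. \<bar>coeff q j\<bar> * R ^ j) \<le> \<bar>lead_coeff q\<bar> * R ^ degree q"
  shows "(\<lambda>n. a n / r ^ n) \<longlonglongrightarrow> lin_rec q a 0 / poly q r"
proof -
  define c where "c = lin_rec q a 0 / poly q r"
  have step: "lin_rec q a (Suc n) = r * lin_rec q a n" for n
    using lin_rec_shift[of q a n r] lin_rec_synthetic_div[of p a n r] rec[of n] root
    by (simp add: q_def)
  have geometric: "lin_rec q a n = r ^ n * lin_rec q a 0" for n
    by (induction n) (simp_all add: step)
  have "lin_rec q (\<lambda>m. a m - c * r ^ m) n = 0" for n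
    unfolding lin_rec_diff lin_rec_geometric geometric[of n] c_def using simple by simp
  moreover have "q \<noteq> 0"
    using simple by auto
  ultimately obtain C where C: "\<And>n. \<bar>a n - c * r ^ n\<bar> \<le> C * R ^ n"
    using lin_rec_growth_bound[of q "\<lambda>m. a m - c * r ^ m" R] R(1) bound by blast
  have "(\<lambda>n. (a n - c * r ^ n) / r ^ n) \<longlonglongrightarrow> 0"
  proof (rule tendsto_0_le)
    show "(\<lambda>n. (R / r) ^ n) \<longlonglongrightarrow> 0"
      using R by (intro LIMSEQ_power_zero) simp
    show "\<forall>\<^sub>F n in sequentially. norm ((a n - c * r ^ n) / r ^ n) \<le> norm ((R / r) ^ n) * C"
    proof (intro always_eventually allI)
      fix n
      have "norm ((a n - c * r ^ n) / r ^ n) = \<bar>a n - c * r ^ n\<bar> / r ^ n"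
        using R by (simp add: abs_divide)
      also have "\<dots> \<le> C * R ^ n / r ^ n"
        using C[of n] R by (intro divide_right_mono) auto
      also have "\<dots> = norm ((R / r) ^ n) * C"
        using R by (simp add: power_divide)
      finally show "norm ((a n - c * r ^ n) / r ^ n) \<le> norm ((R / r) ^ n) * C" .
    qed
  qed
  then have "(\<lambda>n. (a n - c * r ^ n) / r ^ n + c) \<longlonglongrightarrow> 0 + c"
    by (intro tendsto_add tendsto_const)
  moreover have "(a n - c * r ^ n) / r ^ n + c = a n / r ^ n" for n
    using R by (simp add: diff_divide_distrib)
  ultimately show ?thesis
    by (simp add: c_def)
qed

lemma ratio_tendsto_of_normalized_limit:
  fixes a :: "nat \<Rightarrow> real"
  assumes lim: "(\<lambda>n. a n / r ^ n) \<longlonglongrightarrow> c" and "c \<noteq> 0" "r \<noteq> 0"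
  shows "(\<lambda>n. a (Suc n) / a n) \<longlonglongrightarrow> r"
proof -
  have "(\<lambda>n. r * ((a (Suc n) / r ^ Suc n) / (a n / r ^ n))) \<longlonglongrightarrow> r * (c / c)"
    using LIMSEQ_Suc[OF lim] lim \<open>c \<noteq> 0\<close> by (intro tendsto_intros)
  moreover have "(\<lambda>n. r * ((a (Suc n) / r ^ Suc n) / (a n / r ^ n))) = (\<lambda>n. a (Suc n) / a n)"
    using \<open>r \<noteq> 0\<close> by (simp add: field_simps)
  ultimately show ?thesis
    using \<open>c \<noteq> 0\<close> by simp
qed

section \<open>Integer polynomials and certified evaluation\<close>

lemma map_poly_of_int_uminus: "map_poly of_int (- p) = - map_poly of_int p"
  by (rule poly_eqI) (simp add: coeff_map_poly)

lemma map_poly_of_int_add: "map_poly of_int (p + q) = map_poly of_int p + map_poly of_int q"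
  by (rule poly_eqI) (simp add: coeff_map_poly)

lemma map_poly_of_int_diff: "map_poly of_int (p - q) = map_poly of_int p - map_poly of_int q"
  by (rule poly_eqI) (simp add: coeff_map_poly)

lemma map_poly_of_int_1: "map_poly of_int 1 = 1"
  by simp

lemma map_poly_of_int_monom: "map_poly of_int (monom c n) = monom (of_int c) n"
  by (simp add: map_poly_monom)

lemma map_poly_of_int_smult: "map_poly of_int (smult c p) = smult (of_int c) (map_poly of_int p)"
  by (rule map_poly_smult) simp_all

lemma map_poly_of_int_sum: "map_poly of_int (sum f A) = (\<Sum>x\<in>A. map_poly of_int (f x))"
  by (rule poly_eqI) (simp add: coeff_map_poly coeff_sum)

lemma map_poly_of_int_pderiv: "map_poly of_int (pderiv p) = pderiv (map_poly of_int p)"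
  by (rule poly_eqI) (simp add: coeff_map_poly coeff_pderiv)

lemma map_poly_of_int_poly_shift: "map_poly of_int (poly_shift n p) = poly_shift n (map_poly of_int p)"
  by (rule poly_eqI) (simp add: coeff_map_poly coeff_poly_shift)

lemma degree_map_poly_of_int: "degree (map_poly (of_int :: int \<Rightarrow> 'a::ring_char_0) p) = degree p"
  by (rule degree_map_poly) simp

lemma lin_rec_of_int:
  "lin_rec (map_poly of_int p) (\<lambda>m. of_int (a m)) n = (of_int (lin_rec p a n) :: 'a::comm_ring_1)"
  by (induction p arbitrary: n) (simp_all add: lin_rec_pCons map_poly_pCons)

lemma fps_of_poly_of_int_mult:
  assumes "fps_of_poly q * Abs_fps f = fps_of_poly p"
  shows "fps_of_poly (map_poly of_int q) * Abs_fps (\<lambda>n. of_int (f n)) =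
    (fps_of_poly (map_poly of_int p) :: 'a::comm_ring_1 fps)"
proof (rule fps_ext)
  fix n
  have "(\<Sum>i = 0..n. coeff q i * f (n - i)) = coeff p n"
    using arg_cong[OF assms, of "\<lambda>g. fps_nth g n"] by (simp add: fps_mult_nth)
  then show "fps_nth (fps_of_poly (map_poly of_int q) * Abs_fps (\<lambda>n. of_int (f n))) n =
      fps_nth (fps_of_poly (map_poly of_int p) :: 'a fps) n"
    by (simp add: fps_mult_nth coeff_map_poly flip: of_int_mult of_int_sum)
qed

lemmas fps_of_int_poly_simps =
  map_poly_of_int_uminus map_poly_of_int_add map_poly_of_int_diff map_poly_of_int_1
  map_poly_of_int_monom fps_of_poly_uminus fps_of_poly_add fps_of_poly_diff fps_of_poly_1
  fps_of_poly_monom of_int_1 of_int_numeral fps_const_1_eq_1 numeral_fps_const[symmetric]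
  mult_1_left power_one_right

(* Interval Horner scheme in fixed point: for x in [lo / M, hi / M] it encloses S * poly cs x,
   rounding every division by M outwards. *)
fun horner_enclosure :: "int list \<Rightarrow> int \<Rightarrow> int \<Rightarrow> int \<Rightarrow> int \<Rightarrow> int \<times> int" where
  "horner_enclosure [] S M lo hi = (0, 0)"
| "horner_enclosure (c # cs) S M lo hi =
     (case horner_enclosure cs S M lo hi of (l, u) \<Rightarrow>
       (c * S + min (lo * l) (hi * l) div M, c * S - (- max (lo * u) (hi * u)) div M))"

lemma of_int_div_le: "0 < M \<Longrightarrow> real_of_int (k div M) \<le> of_int k / of_int M"
  by (metis floor_divide_of_int_eq of_int_floor_le)

lemma mult_ge_min_endpoints:
  fixes x l :: real
  assumes "a \<le> x" "x \<le> b"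
  shows "min (a * l) (b * l) \<le> x * l"
  using assms by (cases "0 \<le> l") (auto intro: mult_right_mono mult_right_mono_neg min.coboundedI1 min.coboundedI2)

lemma mult_le_max_endpoints:
  fixes x l :: real
  assumes "a \<le> x" "x \<le> b"
  shows "x * l \<le> max (a * l) (b * l)"
  using assms by (cases "0 \<le> l") (auto intro: mult_right_mono mult_right_mono_neg max.coboundedI1 max.coboundedI2)

lemma horner_enclosure:
  fixes x :: real
  assumes "0 \<le> lo" "0 < M" "of_int lo / of_int M \<le> x" "x \<le> of_int hi / of_int M"
  shows "of_int (fst (horner_enclosure cs S M lo hi)) \<le> of_int S * poly (Poly (map of_int cs)) x
       \<and> of_int S * poly (Poly (map of_int cs)) x \<le> of_int (snd (horner_enclosure cs S M lo hi))"
proof (induction cs)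
  case (Cons c cs)
  obtain l u where lu: "horner_enclosure cs S M lo hi = (l, u)" by force
  define v where "v = of_int S * poly (Poly (map of_int cs)) x"
  have v: "of_int l \<le> v" "v \<le> of_int u"
    using Cons.IH by (simp_all add: lu v_def)
  have M: "0 < real_of_int M"
    using assms by simp
  then have "0 \<le> real_of_int lo / of_int M"
    using assms(1) by simp
  with assms(3) have "0 \<le> x"
    by linarith
  have "of_int (min (lo * l) (hi * l) div M) \<le> real_of_int (min (lo * l) (hi * l)) / of_int M"
    using assms by (intro of_int_div_le)
  also have "\<dots> = min (of_int lo / of_int M * of_int l) (of_int hi / of_int M * of_int l)"
    using M by (simp add: of_int_min min_divide_distrib_right)
  also have "\<dots> \<le> x * of_int l"
    using assms by (intro mult_ge_min_endpoints)
  also have "\<dots> \<le> x * v"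
    using v \<open>0 \<le> x\<close> by (intro mult_left_mono)
  finally have lower: "of_int (min (lo * l) (hi * l) div M) \<le> x * v" .
  have "x * v \<le> x * of_int u"
    using v \<open>0 \<le> x\<close> by (intro mult_left_mono)
  also have "\<dots> \<le> max (of_int lo / of_int M * of_int u) (of_int hi / of_int M * of_int u)"
    using assms by (intro mult_le_max_endpoints)
  also have "\<dots> = - (real_of_int (- max (lo * u) (hi * u)) / of_int M)"
    using M by (simp add: of_int_max max_divide_distrib_right)
  also have "\<dots> \<le> - of_int (- max (lo * u) (hi * u) div M)"
    using of_int_div_le[of M "- max (lo * u) (hi * u)"] assms by simp
  finally have upper: "x * v \<le> - of_int (- max (lo * u) (hi * u) div M)" .
  have "of_int S * poly (Poly (map of_int (c # cs))) x = of_int c * of_int S + x * v"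
    by (simp add: v_def algebra_simps)
  with lower upper show ?case
    by (simp add: lu)
qed simp

lemma poly_enclosure:
  fixes x :: real
  assumes "0 \<le> lo" "0 < M" "of_int lo / of_int M \<le> x" "x \<le> of_int hi / of_int M"
  shows "of_int (fst (horner_enclosure (coeffs P) S M lo hi)) \<le> of_int S * poly (map_poly of_int P) x"
    and "of_int S * poly (map_poly of_int P) x \<le> of_int (snd (horner_enclosure (coeffs P) S M lo hi))"
  using horner_enclosure[OF assms, of "coeffs P" S] by (simp_all add: map_poly_def)

lemma poly_pos_by_enclosure:
  fixes x :: real
  assumes "0 < fst (horner_enclosure (coeffs P) S M lo hi)" "0 < S"
    and "0 \<le> lo" "0 < M" "of_int lo / of_int M \<le> x" "x \<le> of_int hi / of_int M"
  shows "0 < poly (map_poly of_int P) x"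
proof -
  have "0 < real_of_int (fst (horner_enclosure (coeffs P) S M lo hi))"
    using assms(1) by simp
  then have "0 < of_int S * poly (map_poly of_int P) x"
    using poly_enclosure(1)[OF assms(3-), where P = P and S = S] by linarith
  then show ?thesis
    using assms(2) by (simp add: zero_less_mult_iff)
qed

lemma abs_poly_le_by_enclosure:
  fixes x :: real and P :: "int poly"
  assumes "0 < S" "0 \<le> lo" "0 < M" "of_int lo / of_int M \<le> x" "x \<le> of_int hi / of_int M"
  defines "e \<equiv> horner_enclosure (coeffs P) S M lo hi"
  shows "\<bar>poly (map_poly of_int P) x\<bar> \<le> of_int (max \<bar>fst e\<bar> \<bar>snd e\<bar>) / of_int S"
proof -
  have "\<bar>of_int S * poly (map_poly of_int P) x\<bar> \<le> of_int (max \<bar>fst e\<bar> \<bar>snd e\<bar>)"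
    using poly_enclosure[OF assms(2-5), where P = P and S = S] by (auto simp: e_def abs_le_iff max_def)
  then show ?thesis
    using assms(1) by (simp add: abs_mult pos_le_divide_eq mult.commute)
qed

section \<open>Compositions avoiding 252, 343 and 424\<close>

lemma comp_includes_length3:
  "comp_includes as [a, b, c] \<longleftrightarrow>
     (\<exists>i. i + 3 \<le> length as \<and> a \<le> as ! i \<and> b \<le> as ! (i + 1) \<and> c \<le> as ! (i + 2))"
proof -
  have "(\<forall>j<length [a, b, c]. [a, b, c] ! j \<le> as ! (i + j)) \<longleftrightarrow>
        a \<le> as ! i \<and> b \<le> as ! (i + 1) \<and> c \<le> as ! (i + 2)" for i
    by (auto simp: less_Suc_eq numeral_3_eq_3)
  then show ?thesis
    unfolding comp_includes_def by (auto simp: eval_nat_numeral)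
qed

definition forbidden :: "nat \<Rightarrow> nat \<Rightarrow> nat \<Rightarrow> bool" where
  "forbidden x y z \<longleftrightarrow>
     (2 \<le> x \<and> 5 \<le> y \<and> 2 \<le> z) \<or> (3 \<le> x \<and> 4 \<le> y \<and> 3 \<le> z) \<or> (4 \<le> x \<and> 2 \<le> y \<and> 4 \<le> z)"

fun admissible :: "nat list \<Rightarrow> bool" where
  "admissible (x # y # z # zs) \<longleftrightarrow> \<not> forbidden x y z \<and> admissible (y # z # zs)"
| "admissible _ \<longleftrightarrow> True"

lemma admissible_iff_nth:
  "admissible as \<longleftrightarrow>
     (\<forall>i. i + 3 \<le> length as \<longrightarrow> \<not> forbidden (as ! i) (as ! (i + 1)) (as ! (i + 2)))"
proof (induction as rule: admissible.induct)
  case (1 x y z zs)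
  let ?P = "\<lambda>as i. i + 3 \<le> length as \<longrightarrow> \<not> forbidden (as ! i) (as ! (i + 1)) (as ! (i + 2))"
  have "(\<forall>i. ?P (x # y # z # zs) i) \<longleftrightarrow>
        ?P (x # y # z # zs) 0 \<and> (\<forall>i. ?P (x # y # z # zs) (Suc i))"
    by (metis not0_implies_Suc)
  then show ?case using "1.IH" by simp
qed auto

lemma avoids_iff_admissible:
  "comp_avoids as [2, 5, 2] \<and> comp_avoids as [3, 4, 3] \<and> comp_avoids as [4, 2, 4] \<longleftrightarrow> admissible as"
proof -
  have "comp_avoids as [2, 5, 2] \<and> comp_avoids as [3, 4, 3] \<and> comp_avoids as [4, 2, 4] \<longleftrightarrow>
    (\<forall>i. i + 3 \<le> length as \<longrightarrow> \<not> forbidden (as ! i) (as ! (i + 1)) (as ! (i + 2)))"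
    unfolding comp_avoids_def comp_includes_length3 forbidden_def by blast
  then show ?thesis by (simp only: admissible_iff_nth)
qed

lemma admissible_Cons_1: "admissible (1 # as) \<longleftrightarrow> admissible as"
proof (cases as)
  case (Cons y ys)
  then show ?thesis by (cases ys) (simp_all add: forbidden_def)
qed simp

lemma forbidden_min_fst: "forbidden (min x 4) y z \<longleftrightarrow> forbidden x y z"
  and forbidden_min_snd: "forbidden x (min y 5) z \<longleftrightarrow> forbidden x y z"
  by (auto simp: forbidden_def min_def)

lemma admissible_min_fst: "admissible (min x 4 # as) \<longleftrightarrow> admissible (x # as)"
proof (cases as)
  case (Cons y ys)
  then show ?thesis by (cases ys) (simp_all add: forbidden_min_fst)
qed simp

lemma admissible_min_snd: "admissible (x # min y 5 # as) \<longleftrightarrow> admissible (x # y # as)"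
proof (cases as)
  case (Cons z zs)
  have "admissible (min y 5 # z # zs) \<longleftrightarrow> admissible (y # z # zs)"
    using admissible_min_fst[of "min y 5"] admissible_min_fst[of y] by (simp add: min.assoc)
  then show ?thesis using Cons by (simp add: forbidden_min_snd)
qed simp

definition continuations :: "nat \<Rightarrow> nat \<Rightarrow> nat \<Rightarrow> nat list set" where
  "continuations x y n = {zs. is_composition n zs \<and> admissible (x # y # zs)}"

lemma a_count_continuations: "a_count n = card (continuations 1 1 n)"
  unfolding a_count_def continuations_def avoids_iff_admissible admissible_Cons_1 ..

lemma finite_continuations: "finite (continuations x y n)"
proof (rule finite_subset)
  have "length zs \<le> sum_list zs" if "\<forall>a\<in>set zs. 0 < a" for zs :: "nat list"
    using that by (induction zs) auto
  then show "continuations x y n \<subseteq> {zs. set zs \<subseteq> {..n} \<and> length zs \<le> n}"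
    by (auto simp: continuations_def is_composition_def member_le_sum_list)
  show "finite {zs. set zs \<subseteq> {..n} \<and> length zs \<le> n}"
    by (rule finite_lists_length_le) simp
qed

lemma continuations_0: "continuations x y 0 = {[]}"
proof -
  have "zs = []" if "is_composition 0 zs" for zs
    using that by (cases zs) (auto simp: is_composition_def)
  then show ?thesis by (auto simp: continuations_def is_composition_def)
qed

lemma continuations_pos:
  assumes "0 < n"
  shows "continuations x y n =
    (\<Union>z \<in> {z \<in> {1..n}. \<not> forbidden x y z}. Cons z ` continuations y z (n - z))"
proof (intro equalityI subsetI)
  fix zs assume zs: "zs \<in> continuations x y n"
  then obtain z zs' where zs_eq: "zs = z # zs'"
    using assms by (cases zs) (auto simp: continuations_def is_composition_def)
  with zs have "z \<in> {z \<in> {1..n}. \<not> forbidden x y z}" "zs' \<in> continuations y z (n - z)"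
    by (auto simp: continuations_def is_composition_def)
  with zs_eq show "zs \<in> (\<Union>z \<in> {z \<in> {1..n}. \<not> forbidden x y z}. Cons z ` continuations y z (n - z))"
    by blast
next
  fix zs assume "zs \<in> (\<Union>z \<in> {z \<in> {1..n}. \<not> forbidden x y z}. Cons z ` continuations y z (n - z))"
  then show "zs \<in> continuations x y n"
    by (auto simp: continuations_def is_composition_def)
qed

lemma continuations_min: "continuations x y n = continuations (min x 4) (min y 5) n"
  unfolding continuations_def admissible_min_fst admissible_min_snd ..

definition cont_count :: "nat \<Rightarrow> nat \<Rightarrow> nat \<Rightarrow> nat" where
  "cont_count x y n = card (continuations x y n)"

lemma cont_count_0: "cont_count x y 0 = 1"
  by (simp add: cont_count_def continuations_0)

lemma cont_count_pos:
  assumes "0 < n"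
  shows "cont_count x y n =
    (\<Sum>z = 1..n. if forbidden x y z then 0 else cont_count (min y 4) (min z 5) (n - z))"
proof -
  let ?Z = "{z \<in> {1..n}. \<not> forbidden x y z}"
  have "cont_count x y n = (\<Sum>z \<in> ?Z. card (Cons z ` continuations y z (n - z)))"
    unfolding cont_count_def continuations_pos[OF assms]
    by (rule card_UN_disjoint) (auto simp: finite_continuations)
  also have "\<dots> = (\<Sum>z \<in> ?Z. cont_count y z (n - z))"
    by (simp add: card_image cont_count_def)
  also have "\<dots> = (\<Sum>z = 1..n. if forbidden x y z then 0 else cont_count y z (n - z))"
    by (rule sum.mono_neutral_cong_left) auto
  finally show ?thesis
    unfolding cont_count_def continuations_min[of y] .
qed

section \<open>A linear system of generating functions\<close>

(* Appending the part z leads from state (x, y) to state (min y 4, min z 5); all parts z >= 5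
   lead to the same state, which produces the factor X^5 / (1 - X). *)
definition transfer_op :: "(nat \<Rightarrow> nat \<Rightarrow> 'a::comm_ring_1 fps) \<Rightarrow> nat \<Rightarrow> nat \<Rightarrow> 'a fps" where
  "transfer_op H x y =
     (\<Sum>z = 1..4. if forbidden x y z then 0 else fps_X ^ z * H (min y 4) z)
     + (if forbidden x y 5 then 0 else fps_X ^ 5 * (H (min y 4) 5 * Abs_fps (\<lambda>_. 1)))"

lemma transfer_op_nth:
  "fps_nth (transfer_op H x y) n =
     (\<Sum>z = 1..4. if forbidden x y z \<or> n < z then 0 else fps_nth (H (min y 4) z) (n - z))
     + (if forbidden x y 5 \<or> n < 5 then 0 else \<Sum>i\<le>n - 5. fps_nth (H (min y 4) 5) i)"
proof -
  have "fps_nth (F * Abs_fps (\<lambda>_. 1)) m = (\<Sum>i\<le>m. fps_nth F i)" for F :: "'a fps" and m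
    by (simp add: fps_mult_nth atLeast0AtMost)
  moreover have "(if P then 0 else if Q then 0 else c) = (if P \<or> Q then 0 else c)" for P Q and c :: 'a
    by simp
  ultimately show ?thesis
    by (simp add: transfer_op_def fps_sum_nth fps_X_power_mult_nth if_distrib[of "\<lambda>f. fps_nth f n"]
        cong: if_cong)
qed

lemma transfer_op_linear:
  "transfer_op (\<lambda>x y. D * F x y - G x y) x y = D * transfer_op F x y - transfer_op G x y"
proof -
  have linear_term: "(if P then 0 else a * (D * b - c)) = D * (if P then 0 else a * b) - (if P then 0 else a * c)"
    for P and a b c :: "'a fps"
    by (simp add: algebra_simps)
  have linear_tail: "(if P then 0 else a * ((D * b - c) * e)) =
      D * (if P then 0 else a * (b * e)) - (if P then 0 else a * (c * e))"
    for P and a b c e :: "'a fps"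
    by (simp add: algebra_simps)
  show ?thesis
    unfolding transfer_op_def linear_term linear_tail sum_subtractf
    by (simp add: algebra_simps sum_distrib_left)
qed

definition is_state :: "nat \<Rightarrow> nat \<Rightarrow> bool" where
  "is_state x y \<longleftrightarrow> 1 \<le> x \<and> x \<le> 4 \<and> 1 \<le> y \<and> y \<le> 5"

lemma transfer_op_fixpoint_eq_0:
  assumes fixpoint: "\<And>x y. is_state x y \<Longrightarrow> H x y = transfer_op H x y" and "is_state x y"
  shows "H x y = 0"
proof -
  have "\<forall>x y. is_state x y \<longrightarrow> fps_nth (H x y) n = 0" for n
  proof (induction n rule: less_induct)
    case (less n)
    show ?case
    proof (intro allI impI)
      fix x y assume xy: "is_state x y"
      have "is_state (min y 4) z" if "1 \<le> z" "z \<le> 5" for z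
        using xy that by (simp add: is_state_def)
      with less have "fps_nth (H (min y 4) z) m = 0" if "1 \<le> z" "z \<le> 5" "m < n" for z m
        using that by blast
      then have "fps_nth (transfer_op H x y) n = 0"
        unfolding transfer_op_nth by (auto intro!: sum.neutral)
      then show "fps_nth (H x y) n = 0" using fixpoint[OF xy] by simp
    qed
  qed
  with assms(2) show ?thesis by (intro fps_ext) simp
qed

definition cont_gf :: "nat \<Rightarrow> nat \<Rightarrow> 'a::comm_ring_1 fps" where
  "cont_gf x y = Abs_fps (\<lambda>n. of_nat (cont_count x y n))"

lemma sum_parts_ge_5:
  fixes f :: "nat \<Rightarrow> 'a::comm_monoid_add"
  shows "(\<Sum>z = 5..n. if forbidden x y z then 0 else f (n - z)) =
    (if forbidden x y 5 \<or> n < 5 then 0 else \<Sum>i\<le>n - 5. f i)"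
proof -
  have forbidden_ge_5: "forbidden x y z \<longleftrightarrow> (2 \<le> x \<and> 5 \<le> y) \<or> (3 \<le> x \<and> 4 \<le> y) \<or> (4 \<le> x \<and> 2 \<le> y)"
    if "5 \<le> z" for z
    using that by (auto simp: forbidden_def)
  show ?thesis
  proof (cases "forbidden x y 5 \<or> n < 5")
    case True
    then show ?thesis by (auto simp: forbidden_ge_5 intro!: sum.neutral)
  next
    case False
    then have "(\<Sum>z = 5..n. if forbidden x y z then 0 else f (n - z)) = (\<Sum>z = 5..n. f (n - z))"
      by (intro sum.cong) (auto simp: forbidden_ge_5)
    also have "\<dots> = (\<Sum>i\<le>n - 5. f i)"
      by (rule sum.reindex_bij_witness[where i = "\<lambda>i. n - i" and j = "\<lambda>z. n - z"])
        (use False in auto)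
    finally show ?thesis using False by simp
  qed
qed

lemma cont_gf_eq: "(cont_gf x y :: 'a::comm_ring_1 fps) = 1 + transfer_op cont_gf x y"
proof (rule fps_ext)
  fix n
  let ?c = "\<lambda>z m. of_nat (cont_count (min y 4) z m) :: 'a"
  show "fps_nth (cont_gf x y :: 'a fps) n = fps_nth (1 + transfer_op cont_gf x y) n"
  proof (cases "n = 0")
    case True
    then show ?thesis by (simp add: cont_gf_def cont_count_0 transfer_op_nth)
  next
    case False
    define g where "g z = (if forbidden x y z then 0 else ?c (min z 5) (n - z))" for z
    have "fps_nth (cont_gf x y) n = (\<Sum>z = 1..n. g z)"
      using False
      by (simp add: cont_gf_def cont_count_pos g_def of_nat_sum if_distrib[of "of_nat :: nat \<Rightarrow> 'a"]
          cong: if_cong)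
    also have "\<dots> = (\<Sum>z \<in> {1..n} \<inter> {1..4}. g z) + (\<Sum>z \<in> {1..n} - {1..4}. g z)"
      by (rule sum.Int_Diff) simp
    also have "{1..n} - {1..4} = {5..n}"
      by auto
    also have "(\<Sum>z \<in> {1..n} \<inter> {1..4}. g z) =
        (\<Sum>z = 1..4. if forbidden x y z \<or> n < z then 0 else ?c z (n - z))"
      by (rule sum.mono_neutral_cong_left) (auto simp: g_def)
    also have "(\<Sum>z = 5..n. g z) = (\<Sum>z = 5..n. if forbidden x y z then 0 else ?c 5 (n - z))"
      by (intro sum.cong) (simp_all add: g_def)
    also have "\<dots> = (if forbidden x y 5 \<or> n < 5 then 0 else \<Sum>i\<le>n - 5. ?c 5 i)"
      by (rule sum_parts_ge_5)
    also have "(\<Sum>z = 1..4. if forbidden x y z \<or> n < z then 0 else ?c z (n - z)) +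
        (if forbidden x y 5 \<or> n < 5 then 0 else \<Sum>i\<le>n - 5. ?c 5 i) =
        fps_nth (transfer_op cont_gf x y) n"
      by (simp only: transfer_op_nth cont_gf_def fps_nth_Abs_fps)
    finally show ?thesis using False by simp
  qed
qed

definition cont_den :: "int poly" where
  "cont_den = [:1, -3, 2, 0, 1, -2, 1, -1, -1, 0, 3, -3, 2, 2, -2, -3, 0, 0, -1:]"

(* cont_num x y / cont_den is the generating function of the continuations of state (x, y); the
   table comes from solving the linear system and is verified below. *)
definition cont_num :: "nat \<Rightarrow> nat \<Rightarrow> int poly" where
  "cont_num x y =
    [[[:1, -2, 1, 0, 1, -1, 1, 0, 0, 0, 1, -3, 0, 1, 3, 0, 0, 1:],
      [:1, -2, 1, 0, 1, -1, 1, -1, 0, 0, 1, -3, 2, 0, 1, -1:],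
      [:1, -2, 1, 0, 1, -1, 1, -2, 1, 0, 1, -1, 0, -1, 1:],
      [:1, -2, 1, 0, 1, -1, 0, -2, 2, 1, 2, -3, 0, 1, -1:],
      [:1, -2, 1, 0, 1, -1, 0, -2, 2, 1, 2, -3, 0, 1, -1:]],
     [[:1, -2, 1, 0, 1, -1, 1, 0, 0, 0, 1, -3, 0, 1, 3, 0, 0, 1:],
      [:1, -2, 1, 0, 1, -1, 1, -1, 0, 0, 1, -3, 2, 0, 1, -1:],
      [:1, -2, 1, 0, 1, -1, 1, -2, 1, 0, 1, -1, 0, -1, 1:],
      [:1, -2, 1, 0, 1, -1, 0, -2, 2, 1, 2, -3, 0, 1, -1:],
      [:1, -2, 0, 1, 1, -1, 0, 0, -1, 0, 3, -2, -1, 2, -1:]],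
     [[:1, -2, 1, 0, 1, -1, 1, 0, 0, 0, 1, -3, 0, 1, 3, 0, 0, 1:],
      [:1, -2, 1, 0, 1, -1, 1, -1, 0, 0, 1, -3, 2, 0, 1, -1:],
      [:1, -2, 1, 0, 1, -1, 1, -2, 1, 0, 1, -1, 0, -1, 1:],
      [:1, -2, 1, -1, 2, -1, 0, 0, 0, 0, 2, -2, 0, 1, -1:],
      [:1, -2, 0, 1, 1, -1, 0, 0, -1, 0, 3, -2, -1, 2, -1:]],
     [[:1, -2, 1, 0, 1, -1, 1, 0, 0, 0, 1, -3, 0, 1, 3, 0, 0, 1:],
      [:1, -2, 1, 0, 0, 0, 1, 0, -1, 0, 1, -1:],
      [:1, -2, 1, 0, 0, 0, 1, 0, -1, 0, 1, -1:],
      [:1, -2, 1, -1, 2, -1, 0, 0, 0, 0, 2, -2, 0, 1, -1:],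
      [:1, -2, 0, 1, 1, -1, 0, 0, -1, 0, 3, -2, -1, 2, -1:]]] ! (x - 1) ! (y - 1)"

lemma cont_num_poly_identity:
  assumes "is_state x y"
  shows "(1 - [:0, 1:]) * cont_num x y =
       (1 - [:0, 1:]) * cont_den
       + (\<Sum>z = 1..4. if forbidden x y z then 0
                       else (1 - [:0, 1:]) * [:0, 1:] ^ z * cont_num (min y 4) z)
       + (if forbidden x y 5 then 0 else [:0, 1:] ^ 5 * cont_num (min y 4) 5)"
proof -
  have "\<forall>x\<in>{1..4}. \<forall>y\<in>{1..5}.
     (1 - [:0, 1:]) * cont_num x y =
       (1 - [:0, 1:]) * cont_den
       + (\<Sum>z = 1..4. if forbidden x y z then 0
                       else (1 - [:0, 1:]) * [:0, 1:] ^ z * cont_num (min y 4) z)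
       + (if forbidden x y 5 then 0 else [:0, 1:] ^ 5 * cont_num (min y 4) 5)"
    by code_simp
  moreover have "x \<in> {1..4}" "y \<in> {1..5}"
    using assms by (auto simp: is_state_def)
  ultimately show ?thesis by blast
qed

lemma one_minus_X_mult_ones: "(1 - fps_X) * Abs_fps (\<lambda>_. 1 :: 'a::comm_ring_1) = 1"
  by (rule fps_ext) (simp add: algebra_simps fps_X_mult_nth)

lemma cont_num_fixpoint:
  assumes "is_state x y"
  shows "fps_of_poly (cont_num x y) =
    fps_of_poly cont_den + transfer_op (\<lambda>x y. fps_of_poly (cont_num x y)) x y"
proof -
  let ?N = "\<lambda>x y. fps_of_poly (cont_num x y)" and ?G = "Abs_fps (\<lambda>_. 1 :: int)"
  from arg_cong[of _ _ fps_of_poly, OF cont_num_poly_identity[OF assms]]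
  have "(1 - fps_X) * ?N x y =
      (1 - fps_X) * fps_of_poly cont_den
      + (\<Sum>z = 1..4. if forbidden x y z then 0 else (1 - fps_X) * (fps_X ^ z * ?N (min y 4) z))
      + (if forbidden x y 5 then 0 else fps_X ^ 5 * ?N (min y 4) 5)"
    by (simp add: fps_of_poly_mult fps_of_poly_add fps_of_poly_diff fps_of_poly_sum
        fps_of_poly_power if_distrib[of fps_of_poly] mult.assoc cong: if_cong)
  also have "fps_X ^ 5 * ?N (min y 4) 5 = (1 - fps_X) * (fps_X ^ 5 * (?N (min y 4) 5 * ?G))"
    using one_minus_X_mult_ones[where 'a = int] by (simp add: ac_simps)
  also have "(1 - fps_X) * fps_of_poly cont_den
      + (\<Sum>z = 1..4. if forbidden x y z then 0 else (1 - fps_X) * (fps_X ^ z * ?N (min y 4) z))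
      + (if forbidden x y 5 then 0 else (1 - fps_X) * (fps_X ^ 5 * (?N (min y 4) 5 * ?G))) =
      (1 - fps_X) * (fps_of_poly cont_den + transfer_op ?N x y)"
    unfolding transfer_op_def by (simp add: ring_distribs sum_distrib_left if_distrib[of "(*) _"])
  finally have "(1 - fps_X) * ?N x y = (1 - fps_X) * (fps_of_poly cont_den + transfer_op ?N x y)" .
  moreover have "(1 - fps_X :: int fps) \<noteq> 0"
    using one_minus_X_mult_ones[where 'a = int] by force
  ultimately show ?thesis by simp
qed

lemma cont_den_mult_cont_gf:
  assumes "is_state x y"
  shows "fps_of_poly cont_den * cont_gf x y = fps_of_poly (cont_num x y)"
proof -
  define E where "E x y = fps_of_poly cont_den * cont_gf x y - fps_of_poly (cont_num x y)" for x y
  have "E x y = transfer_op E x y" if "is_state x y" for x y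
    unfolding E_def transfer_op_linear
    by (subst cont_gf_eq, subst cont_num_fixpoint[OF that]) (simp add: algebra_simps)
  then have "E x y = 0"
    using assms by (rule transfer_op_fixpoint_eq_0)
  then show ?thesis by (simp add: E_def)
qed

lemma cont_den_mult_a_count: "fps_of_poly cont_den * Abs_fps (\<lambda>n. int (a_count n)) = fps_of_poly (cont_num 1 1)"
  using cont_den_mult_cont_gf[of 1 1]
  by (simp add: is_state_def cont_gf_def cont_count_def a_count_continuations)

lemma gf_den_eq: "gf_den = - fps_of_poly (map_poly of_int cont_den)"
proof -
  have den: "cont_den = - (monom 1 18 + monom 3 15 + monom 2 14 - monom 2 13 - monom 2 12
      + monom 3 11 - monom 3 10 + monom 1 8 + monom 1 7 - monom 1 6 + monom 2 5 - monom 1 4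
      - monom 2 2 + monom 3 1 - 1)"
    by code_simp
  show ?thesis
    unfolding gf_den_def den by (simp only: fps_of_int_poly_simps minus_minus)
qed

lemma gf_num_eq: "gf_num = fps_of_poly (map_poly of_int (cont_num 1 1))"
proof -
  have num: "cont_num 1 1 = monom 1 17 + monom 3 14 + monom 1 13 - monom 3 11 + monom 1 10
      + monom 1 6 - monom 1 5 + monom 1 4 + monom 1 2 - monom 2 1 + 1"
    by code_simp
  show ?thesis
    unfolding gf_num_def num by (simp only: fps_of_int_poly_simps)
qed

lemma a_count_gf: "Abs_fps (\<lambda>n. real (a_count n)) = - (gf_num / gf_den)"
proof (rule fps_eq_neg_divide)
  show "fps_nth gf_den 0 \<noteq> 0"
    by (simp add: gf_den_eq cont_den_def coeff_map_poly)
  show "gf_den * Abs_fps (\<lambda>n. real (a_count n)) = - gf_num"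
    using fps_of_poly_of_int_mult[OF cont_den_mult_a_count, where 'a = real]
    by (simp add: gf_den_eq gf_num_eq)
qed

lemma a_count_prefix: "quotient_prefix (cont_num 1 1) cont_den n = map (\<lambda>k. int (a_count k)) [0..<n]"
  using quotient_prefix_eq[OF cont_den_mult_a_count, of n] by (simp add: cont_den_def)

lemma a_count_first_values:
  "map a_count [0..<31] =
     [1, 1, 2, 4, 8, 16, 32, 64, 128, 255, 505, 998, 1971, 3893, 7697, 15223, 30113,
      59575, 117861, 233164, 461250, 912423, 1804882, 3570257, 7062369, 13970211,
      27634848, 54665348, 108135332, 213906125, 423134791]"
proof -
  have "map int (map a_count [0..<31]) = quotient_prefix (cont_num 1 1) cont_den 31"
    unfolding a_count_prefix by simp
  also have "\<dots> = map int
     [1, 1, 2, 4, 8, 16, 32, 64, 128, 255, 505, 998, 1971, 3893, 7697, 15223, 30113,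
      59575, 117861, 233164, 461250, 912423, 1804882, 3570257, 7062369, 13970211,
      27634848, 54665348, 108135332, 213906125, 423134791]"
    by (simp only: list.map of_nat_numeral of_nat_1) code_simp
  finally show ?thesis
    by (simp only: inj_map_eq_map inj_of_nat)
qed

section \<open>Asymptotics\<close>

definition char_poly :: "int poly" where
  "char_poly = reflect_poly cont_den"

lemma degree_char_poly: "degree char_poly = 18"
  by code_simp

lemma a_count_lin_rec: "lin_rec (map_poly of_int char_poly) (\<lambda>k. real (a_count k)) n = 0"
proof -
  have "degree (cont_num 1 1) < degree cont_den"
    by code_simp
  then have "lin_rec char_poly (\<lambda>k. int (a_count k)) n = 0"
    using lin_rec_reflect_poly[OF cont_den_mult_a_count] by (simp add: char_poly_def Abs_fps_inverse)
  then show ?thesis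
    using lin_rec_of_int[of char_poly "\<lambda>k. int (a_count k)" n] by simp
qed

abbreviation in_root_interval :: "real \<Rightarrow> bool" where
  "in_root_interval x \<equiv> 35634853602129449 / 2 ^ 54 \<le> x \<and> x \<le> 35634853602129450 / 2 ^ 54"

lemma char_poly_root:
  obtains r where "in_root_interval r" "poly (map_poly of_int char_poly) r = 0"
proof -
  have "0 < fst (horner_enclosure (coeffs (- char_poly)) (2 ^ 66) (2 ^ 54) 35634853602129449 35634853602129449)"
    and "0 < fst (horner_enclosure (coeffs char_poly) (2 ^ 66) (2 ^ 54) 35634853602129450 35634853602129450)"
    by code_simp+
  then have "0 < poly (map_poly of_int (- char_poly)) (35634853602129449 / 2 ^ 54 :: real)"
    and "0 < poly (map_poly of_int char_poly) (35634853602129450 / 2 ^ 54 :: real)"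
    by (auto intro!: poly_pos_by_enclosure[where S = "2 ^ 66" and M = "2 ^ 54"])
  then have "\<exists>r :: real \<ge> 35634853602129449 / 2 ^ 54. r \<le> 35634853602129450 / 2 ^ 54
      \<and> poly (map_poly of_int char_poly) r = 0"
    by (intro IVT') (auto simp: map_poly_of_int_uminus intro!: continuous_intros)
  with that show ?thesis by blast
qed

lemma deflation_bound:
  assumes "in_root_interval r"
  shows "(\<Sum>j<17. \<bar>coeff (synthetic_div (map_poly of_int char_poly) r) j\<bar> * (7 / 4) ^ j) \<le> (7 / 4) ^ 17"
proof -
  define m where "m j = (let e = horner_enclosure (coeffs (poly_shift (Suc j) char_poly)) (2 ^ 10) (2 ^ 10) 2025 2026
    in max \<bar>fst e\<bar> \<bar>snd e\<bar>)" for j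
  have check: "(\<Sum>j<17. m j * 7 ^ j * 4 ^ (17 - j)) \<le> 2 ^ 10 * 7 ^ 17"
    unfolding m_def by code_simp
  have "\<bar>coeff (synthetic_div (map_poly of_int char_poly) r) j\<bar> \<le> of_int (m j) / 2 ^ 10" for j
    unfolding coeff_synthetic_div_conv_poly_shift map_poly_of_int_poly_shift[symmetric] m_def Let_def
    using abs_poly_le_by_enclosure[of "2 ^ 10" 2025 "2 ^ 10" r 2026] assms by simp
  then have "(\<Sum>j<17. \<bar>coeff (synthetic_div (map_poly of_int char_poly) r) j\<bar> * (7 / 4) ^ j)
      \<le> (\<Sum>j<17. of_int (m j) / 2 ^ 10 * (7 / 4) ^ j)"
    by (intro sum_mono mult_right_mono) auto
  also have "\<dots> = (\<Sum>j<17. of_int (m j * 7 ^ j * 4 ^ (17 - j))) / (2 ^ 10 * 4 ^ 17)"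
  proof -
    have term_eq: "of_int (m j) / 2 ^ 10 * (7 / 4) ^ j = (of_int (m j * 7 ^ j * 4 ^ (17 - j)) / (2 ^ 10 * 4 ^ 17) :: real)"
      if "j < 17" for j
    proof -
      have "(7 / 4 :: real) ^ j = 7 ^ j * 4 ^ (17 - j) / 4 ^ 17"
        using that by (simp add: power_divide power_diff)
      then show ?thesis
        by simp
    qed
    show ?thesis
      unfolding sum_divide_distrib by (rule sum.cong) (simp_all only: term_eq lessThan_iff)
  qed
  also have "\<dots> = of_int (\<Sum>j<17. m j * 7 ^ j * 4 ^ (17 - j)) / (2 ^ 10 * 4 ^ 17)"
    by (simp only: of_int_sum)
  also have "\<dots> \<le> of_int (2 ^ 10 * 7 ^ 17) / (2 ^ 10 * 4 ^ 17)"
    by (intro divide_right_mono) (use check in \<open>simp only: of_int_le_iff\<close>, simp)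
  also have "\<dots> = (7 / 4) ^ 17"
    by (simp add: power_divide)
  finally show ?thesis .
qed

lemma pderiv_char_poly_pos:
  assumes "in_root_interval r"
  shows "0 < poly (pderiv (map_poly of_int char_poly)) r"
proof -
  have "0 < fst (horner_enclosure (coeffs (pderiv char_poly)) (2 ^ 10) (2 ^ 10) 2025 2026)"
    by code_simp
  then show ?thesis
    unfolding map_poly_of_int_pderiv[symmetric]
    by (rule poly_pos_by_enclosure) (use assms in simp_all)
qed

(* The initial values a(0), ..., a(17) enter through quotient_prefix to keep this executable. *)
definition limit_num :: "int poly" where
  "limit_num = (let as = quotient_prefix (cont_num 1 1) cont_den 18
     in \<Sum>j<18. smult (as ! j) (poly_shift (Suc j) char_poly))"

lemma lin_rec_synthetic_div_a_count:
  "lin_rec (synthetic_div (map_poly of_int char_poly) r) (\<lambda>k. real (a_count k)) 0 =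
     poly (map_poly of_int limit_num) r"
proof -
  have "map_poly of_int limit_num =
      (\<Sum>j<18. smult (real (a_count j)) (poly_shift (Suc j) (map_poly of_int char_poly)))"
    unfolding limit_num_def Let_def map_poly_of_int_sum map_poly_of_int_smult map_poly_of_int_poly_shift
      a_count_prefix
    by (intro sum.cong) auto
  then show ?thesis
    by (simp add: lin_rec_synthetic_div_at_0 degree_map_poly_of_int degree_char_poly)
qed

lemma limit_const_bounds:
  assumes "in_root_interval r"
  defines "c \<equiv> poly (map_poly of_int limit_num) r / poly (pderiv (map_poly of_int char_poly)) r"
  shows "0.54805291269 \<le> c" and "c < 0.54805291270"
proof -
  define eN where "eN = horner_enclosure (coeffs limit_num) (2 ^ 66) (2 ^ 54) 35634853602129449 35634853602129450"
  define eD where "eD = horner_enclosure (coeffs (pderiv char_poly)) (2 ^ 66) (2 ^ 54) 35634853602129449 35634853602129450"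
  have "0 < fst eD \<and> 54805291269 * snd eD \<le> 100000000000 * fst eN
      \<and> 100000000000 * snd eN < 54805291270 * fst eD"
    unfolding eN_def eD_def by code_simp
  then have check: "0 < real_of_int (fst eD)"
    "54805291269 * real_of_int (snd eD) \<le> 100000000000 * real_of_int (fst eN)"
    "100000000000 * real_of_int (snd eN) < 54805291270 * real_of_int (fst eD)"
    by (simp_all flip: of_int_mult of_int_le_iff of_int_less_iff)
  define N where "N = 2 ^ 66 * poly (map_poly real_of_int limit_num) r"
  define D where "D = 2 ^ 66 * poly (map_poly real_of_int (pderiv char_poly)) r"
  have bounds: "of_int (fst eN) \<le> N" "N \<le> of_int (snd eN)" "of_int (fst eD) \<le> D" "D \<le> of_int (snd eD)"
    using poly_enclosure[of 35634853602129449 "2 ^ 54" r 35634853602129450, where S = "2 ^ 66"]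
      assms(1)
    by (simp_all add: eN_def eD_def N_def D_def)
  have c_eq: "c = N / D"
    by (simp add: c_def N_def D_def map_poly_of_int_pderiv)
  have "0 < D"
    using check(1) bounds(3) by linarith
  moreover have "54805291269 * D \<le> 100000000000 * N"
    using check(2) bounds(1,4) by linarith
  moreover have "100000000000 * N < 54805291270 * D"
    using check(3) bounds(2,3) by linarith
  ultimately show "0.54805291269 \<le> c" and "c < 0.54805291270"
    unfolding c_eq by (simp_all add: field_simps)
qed

lemma a_count_asymptotics:
  "\<exists>r c :: real.
     1.9781317474 \<le> r \<and> r < 1.9781317475 \<and> 0.54805291269 \<le> c \<and> c < 0.54805291270
     \<and> (\<lambda>n. real (a_count (Suc n)) / real (a_count n)) \<longlonglongrightarrow> r
     \<and> (\<lambda>n. real (a_count n)) \<sim>[at_top] (\<lambda>n. c * r ^ n)"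
proof -
  let ?p = "map_poly real_of_int char_poly" and ?a = "\<lambda>n. real (a_count n)"
  obtain r where r: "in_root_interval r" "poly ?p r = 0"
    by (rule char_poly_root)
  define q where "q = synthetic_div ?p r"
  have deg: "degree q = 17"
    by (simp add: q_def degree_synthetic_div degree_map_poly_of_int degree_char_poly)
  have "poly_shift 18 char_poly = 1"
    by code_simp
  then have lead: "lead_coeff q = 1"
    using deg by (simp add: q_def coeff_synthetic_div_conv_poly_shift flip: map_poly_of_int_poly_shift)
  define c where "c = poly (map_poly of_int limit_num) r / poly (pderiv ?p) r"
  have "(\<lambda>n. ?a n / r ^ n) \<longlonglongrightarrow> lin_rec q ?a 0 / poly q r"
    unfolding q_def
  proof (rule lin_rec_dominant_root[where R = "7 / 4"])
    show "lin_rec ?p ?a n = 0" for n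
      by (rule a_count_lin_rec)
    show "poly (synthetic_div ?p r) r \<noteq> 0"
      using pderiv_char_poly_pos[OF r(1)] by (simp add: poly_synthetic_div_self)
    show "(\<Sum>j<degree (synthetic_div ?p r). \<bar>coeff (synthetic_div ?p r) j\<bar> * (7 / 4) ^ j)
        \<le> \<bar>lead_coeff (synthetic_div ?p r)\<bar> * (7 / 4) ^ degree (synthetic_div ?p r)"
      using deflation_bound[OF r(1)] deg lead by (simp add: q_def)
  qed (use r in simp_all)
  then have lim: "(\<lambda>n. ?a n / r ^ n) \<longlonglongrightarrow> c"
    by (simp add: c_def q_def lin_rec_synthetic_div_a_count poly_synthetic_div_self)
  have c: "0.54805291269 \<le> c" "c < 0.54805291270"
    using limit_const_bounds[OF r(1)] by (simp_all add: c_def)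
  show ?thesis
  proof (intro exI conjI)
    show "1.9781317474 \<le> r" "r < 1.9781317475"
      using r(1) by simp_all
    show "(\<lambda>n. ?a (Suc n) / ?a n) \<longlonglongrightarrow> r"
      using c r(1) by (intro ratio_tendsto_of_normalized_limit[OF lim]) simp_all
    show "?a \<sim>[at_top] (\<lambda>n. c * r ^ n)"
      using c by (intro asymp_equivI'_const lim) simp
  qed (use c in simp_all)
qed

theorem theorem2:
  shows "Abs_fps (\<lambda>n. real (a_count n)) = - (gf_num / gf_den)
    \<and> map a_count [0..<31] =
      [1, 1, 2, 4, 8, 16, 32, 64, 128, 255, 505, 998, 1971, 3893, 7697, 15223, 30113,
       59575, 117861, 233164, 461250, 912423, 1804882, 3570257, 7062369, 13970211,
       27634848, 54665348, 108135332, 213906125, 423134791]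
    \<and> (\<exists>r c :: real.
         1.9781317474 \<le> r \<and> r < 1.9781317475
       \<and> 0.54805291269 \<le> c \<and> c < 0.54805291270
       \<and> (\<lambda>n. real (a_count (Suc n)) / real (a_count n)) \<longlonglongrightarrow> r
       \<and> (\<lambda>n. real (a_count n)) \<sim>[at_top] (\<lambda>n. c * r ^ n))"
  using a_count_gf a_count_first_values a_count_asymptotics by blast

end
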